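(* Let $\mathbf a=\{a_1,\dots,a_A\}$, $\mathbf b=\{b_1,\dots,b_B\}$, $\mathbf c=\{c_1,\dots,c_C\}$, $\mathbf d=\{d_1,\dots,d_D\}$ be lists of complex numbers ($A,B,C,D\in\mathbb N_0$, not all zero), $z=e^{i\psi}$, $w=e^{i\eta}$, $\sigma,\tau\in(0,\infty)$, $t\in\mathbb C\setminus\{0\}$, such that for all $i,j,k,l$: $|b_j|<|d_l|<\min\{\tau/|t|,1/\sigma\}$, $|d_la_i|<1/|t|$, and $|a_i|<|c_k|<\min\{\sigma/|t|,1/\tau\}$. Then $$\int_{-\pi}^{\pi}\frac{(\mathbf b\frac\sigma z,t\mathbf a\frac z\sigma;q)_\infty}{(\mathbf d\frac\sigma z,t\mathbf c\frac z\sigma;q)_\infty}d\psi=\int_{-\pi}^{\pi}\frac{(\mathbf a\frac\tau w,t\mathbf b\frac w\tau;q)_\infty}{(\mathbf c\frac\tau w,t\mathbf d\frac w\tau;q)_\infty}d\eta.$$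
   Context: $q\in\mathbb C$, $0<|q|<1$; $(a;q)_\infty=\prod_{j\ge0}(1-aq^j)$; for a list $\mathbf u$ and scalar $y$, $(\mathbf u y;q)_\infty=\prod_i(u_iy;q)_\infty$, and several entries separated by commas denote the product. *)

theory Defs
  imports "HOL-Analysis.Analysis"
begin

definition qpoch_inf :: "complex \<Rightarrow> complex \<Rightarrow> complex" where
  "qpoch_inf a q = (\<Prod>j. (1 - a * q ^ j))"

definition qpoch_list :: "complex list \<Rightarrow> complex \<Rightarrow> complex \<Rightarrow> complex" where
  "qpoch_list us y q = prod_list (map (\<lambda>u. qpoch_inf (u * y) q) us)"

end

theory Submission
  imports Defs "HOL-Complex_Analysis.Complex_Analysis"
begin

text \<open>The substitution \<open>u = z/\<sigma>\<close> turns the left-hand side into the integral of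
  \<open>K(u) = (\<^bold>b/u, t\<^bold>a u;q)\<^sub>\<infinity> / (\<^bold>d/u, t\<^bold>c u;q)\<^sub>\<infinity>\<close> over the circle \<open>|u| = 1/\<sigma>\<close>, and
  the substitution \<open>u = \<tau>/(t w)\<close>, under which \<open>1/u\<close> and \<open>t u\<close> trade places, turns the
  right-hand side into the integral of the same \<open>K\<close> over the circle \<open>|u| = \<tau>/|t|\<close>.
  The function \<open>K\<close> is holomorphic on the region \<open>|d| < |u| < 1/|t c|\<close>, which contains
  the closed annulus between the two circles, so by Cauchy's theorem the integrals of
  \<open>K(u)/u\<close> around both circles agree.\<close>

lemma convergent_prod_qpoch:
  fixes q x :: complex
  assumes "norm q < 1"
  shows "convergent_prod (\<lambda>j. 1 - x * q ^ j)"
proof -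
  have "summable (\<lambda>j. norm ((1 - x * q ^ j) - 1))"
    using assms by (simp add: norm_mult norm_power summable_geometric)
  then show ?thesis
    using abs_convergent_prod_conv_summable abs_convergent_prod_imp_convergent_prod by blast
qed

lemma qpoch_inf_nonzero:
  fixes q x :: complex
  assumes q: "norm q < 1" and x: "norm x < 1"
  shows "qpoch_inf x q \<noteq> 0"
  unfolding qpoch_inf_def
proof (rule prodinf_nonzero[OF convergent_prod_qpoch[OF q]])
  fix j
  have "norm (x * q ^ j) \<le> norm x"
    using q by (simp add: norm_mult norm_power mult_left_le power_le_one)
  then show "1 - x * q ^ j \<noteq> 0"
    using x by auto
qed

lemma uniform_limit_qpoch_partial_prod:
  fixes q :: complex
  assumes q: "norm q < 1"
  shows "uniform_limit (cball 0 R) (\<lambda>N x. \<Prod>j<N. 1 - x * q ^ j) (\<lambda>x. qpoch_inf x q) sequentially"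
proof -
  define P where "P = (\<lambda>N x. \<Prod>j<N. 1 - x * q ^ j)"
  have "uniformly_convergent_on (cball 0 R) P"
    unfolding P_def
  proof (rule uniformly_convergent_on_prod')
    show "uniformly_convergent_on (cball 0 R) (\<lambda>N x. \<Sum>j<N. norm ((1 - x * q ^ j) - 1))"
    proof (rule Weierstrass_m_test')
      fix j and x :: complex
      assume "x \<in> cball 0 R"
      then have "norm x \<le> R"
        by simp
      then show "norm (norm ((1 - x * q ^ j) - 1)) \<le> R * norm q ^ j"
        by (simp add: norm_mult norm_power mult_right_mono)
    next
      show "summable (\<lambda>j. R * norm q ^ j)"
        using q by (intro summable_mult summable_geometric) simp
    qed
  qed (auto intro!: continuous_intros)
  then obtain g where g: "uniform_limit (cball 0 R) P g sequentially"
    by (auto simp: uniformly_convergent_on_def)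
  also have "?this \<longleftrightarrow> uniform_limit (cball 0 R) P (\<lambda>x. qpoch_inf x q) sequentially"
  proof (intro uniform_limit_cong)
    fix x :: complex
    assume "x \<in> cball 0 R"
    with g have "(\<lambda>N. P (Suc N) x) \<longlonglongrightarrow> g x"
      by (metis tendsto_uniform_limitI filterlim_sequentially_Suc)
    moreover have "(\<lambda>N. P (Suc N) x) \<longlonglongrightarrow> qpoch_inf x q"
      using convergent_prod_LIMSEQ[OF convergent_prod_qpoch[OF q, of x]]
      by (simp add: P_def qpoch_inf_def lessThan_Suc_atMost)
    ultimately show "g x = qpoch_inf x q"
      by (rule LIMSEQ_unique)
  qed auto
  finally show ?thesis
    unfolding P_def .
qed

lemma qpoch_inf_holomorphic:
  fixes q :: complex
  assumes "norm q < 1"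
  shows "(\<lambda>x. qpoch_inf x q) holomorphic_on S"
proof (rule holomorphic_on_subset[of _ UNIV])
  show "(\<lambda>x. qpoch_inf x q) holomorphic_on UNIV"
  proof (rule holomorphic_uniform_sequence[where f = "\<lambda>N x. \<Prod>j<N. 1 - x * q ^ j"])
    fix z :: complex
    have "cball z 1 \<subseteq> cball 0 (norm z + 1)"
      by (simp add: cball_subset_cball_iff)
    then have "uniform_limit (cball z 1) (\<lambda>N x. \<Prod>j<N. 1 - x * q ^ j) (\<lambda>x. qpoch_inf x q) sequentially"
      by (rule uniform_limit_on_subset[OF uniform_limit_qpoch_partial_prod[OF assms]])
    then show "\<exists>d>0. cball z d \<subseteq> UNIV \<and>
        uniform_limit (cball z d) (\<lambda>N x. \<Prod>j<N. 1 - x * q ^ j) (\<lambda>x. qpoch_inf x q) sequentially"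
      by (intro exI[of _ 1]) auto
  qed (auto intro!: holomorphic_intros)
qed auto

lemma qpoch_list_holomorphic:
  assumes q: "norm q < 1" and g: "g holomorphic_on S"
  shows "(\<lambda>u. qpoch_list us (g u) q) holomorphic_on S"
proof (induction us)
  case Nil
  then show ?case
    by (simp add: qpoch_list_def)
next
  case (Cons a us)
  have "(\<lambda>u. qpoch_inf (a * g u) q) holomorphic_on S"
    using holomorphic_on_compose[OF holomorphic_on_mult[OF holomorphic_on_const g] qpoch_inf_holomorphic[OF q]]
    by (simp add: o_def)
  with Cons show ?case
    by (simp add: qpoch_list_def holomorphic_on_mult)
qed

lemma qpoch_list_nonzero:
  assumes "norm q < 1" and "\<forall>u\<in>set us. norm (u * y) < 1"
  shows "qpoch_list us y q \<noteq> 0"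
  using assms qpoch_inf_nonzero by (auto simp: qpoch_list_def prod_list_zero_iff)

lemma homotopic_loops_concentric_circles:
  assumes "r1 > 0" "r2 > 0"
    and annulus: "{u. min r1 r2 \<le> norm u \<and> norm u \<le> max r1 r2} \<subseteq> S"
  shows "homotopic_loops S (part_circlepath 0 r1 (a - pi) (a + pi)) (part_circlepath 0 r2 (b - pi) (b + pi))"
  unfolding homotopic_loops
proof (intro exI conjI)
  define h where "h = (\<lambda>(x, s). of_real ((1 - x) * r1 + x * r2) *
    exp (\<i> * of_real (linepath (a + x * (b - a) - pi) (a + x * (b - a) + pi) s)))"
  show "continuous_on ({0..1} \<times> {0..1}) h"
    unfolding h_def linepath_def by (auto intro!: continuous_intros simp: case_prod_unfold)
  show "h \<in> {0..1} \<times> {0..1} \<rightarrow> S"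
  proof clarsimp
    fix x s :: real
    assume "0 \<le> x" "x \<le> 1"
    then have "(1 - x) * r1 + x * r2 \<in> closed_segment r1 r2"
      by (auto simp: closed_segment_def)
    then have "min r1 r2 \<le> (1 - x) * r1 + x * r2 \<and> (1 - x) * r1 + x * r2 \<le> max r1 r2"
      by (auto simp: closed_segment_eq_real_ivl split: if_splits)
    moreover have "norm (h (x, s)) = \<bar>(1 - x) * r1 + x * r2\<bar>"
      by (simp only: h_def case_prod_conv norm_mult norm_of_real norm_exp_i_times mult_1_right)
    ultimately show "h (x, s) \<in> S"
      using annulus \<open>r1 > 0\<close> \<open>r2 > 0\<close> by auto
  qed
  show "\<forall>s\<in>{0..1}. h (0, s) = part_circlepath 0 r1 (a - pi) (a + pi) s"
    by (simp add: h_def part_circlepath_def)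
  show "\<forall>s\<in>{0..1}. h (1, s) = part_circlepath 0 r2 (b - pi) (b + pi) s"
    by (simp add: h_def part_circlepath_def)
  have period: "exp (\<i> * of_real (c + pi)) = exp (\<i> * of_real (c - pi))" for c
  proof -
    have "\<i> * of_real (c + pi) = \<i> * of_real (c - pi) + 2 * of_real pi * \<i>"
      by (simp add: algebra_simps)
    then show ?thesis
      by (simp add: exp_add)
  qed
  have "h (x, 1) = h (x, 0)" for x
    by (simp only: h_def case_prod_conv linepath_0' linepath_1' period)
  then show "\<forall>x\<in>{0..1}. pathfinish (h \<circ> Pair x) = pathstart (h \<circ> Pair x)"
    by (simp add: pathfinish_def pathstart_def)
qed

lemma has_integral_circle_param:
  assumes "a < b" "r \<noteq> 0" and "(\<lambda>u. F u / u) contour_integrable_on part_circlepath 0 r a b"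
  shows "((\<lambda>\<psi>. F (of_real r * cis \<psi>)) has_integral
           contour_integral (part_circlepath 0 r a b) (\<lambda>u. F u / u) / \<i>) {a..b}"
proof -
  have "((\<lambda>u. F u / u) has_contour_integral contour_integral (part_circlepath 0 r a b) (\<lambda>u. F u / u))
          (part_circlepath 0 r a b)"
    using assms(3) by (rule has_contour_integral_integral)
  then have "((\<lambda>\<psi>. F (r * cis \<psi>) / (r * cis \<psi>) * r * \<i> * cis \<psi>) has_integral
               contour_integral (part_circlepath 0 r a b) (\<lambda>u. F u / u)) {a..b}"
    using has_contour_integral_part_circlepath_iff[OF \<open>a < b\<close>] by simp
  then have "((\<lambda>\<psi>. \<i> * F (of_real r * cis \<psi>)) has_integral
               contour_integral (part_circlepath 0 r a b) (\<lambda>u. F u / u)) {a..b}"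
    by (rule has_integral_eq[rotated]) (use \<open>r \<noteq> 0\<close> in \<open>simp add: field_simps\<close>)
  from has_integral_mult_right[OF this, of "1 / \<i>"] show ?thesis
    by simp
qed

lemma integral_circle_eq_annulus:
  fixes F :: "complex \<Rightarrow> complex"
  assumes hol: "F holomorphic_on S" and "open S" and r: "r1 > 0" "r2 > 0"
    and annulus: "{u. min r1 r2 \<le> norm u \<and> norm u \<le> max r1 r2} \<subseteq> S"
  shows "integral {a - pi..a + pi} (\<lambda>\<psi>. F (of_real r1 * cis \<psi>)) =
         integral {b - pi..b + pi} (\<lambda>\<psi>. F (of_real r2 * cis \<psi>))"
proof -
  let ?S = "S - {0}" and ?f = "\<lambda>u. F u / u"
  have "open ?S"
    using \<open>open S\<close> by (simp add: open_delete)
  have hol': "?f holomorphic_on ?S"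
    by (intro holomorphic_intros holomorphic_on_subset[OF hol]) auto
  have annulus': "{u. min r1 r2 \<le> norm u \<and> norm u \<le> max r1 r2} \<subseteq> ?S"
    using annulus r by auto
  have image: "path_image (part_circlepath 0 r (c - pi) (c + pi)) \<subseteq> ?S"
    if "r = r1 \<or> r = r2" for r c
  proof -
    have "path_image (part_circlepath 0 r (c - pi) (c + pi)) \<subseteq> sphere 0 r"
      using that r by (intro path_image_part_circlepath_subset) auto
    moreover have "sphere 0 r \<subseteq> {u. min r1 r2 \<le> norm u \<and> norm u \<le> max r1 r2}"
      using that by auto
    ultimately show ?thesis
      using annulus' by blast
  qed
  have param: "((\<lambda>\<psi>. F (of_real r * cis \<psi>)) has_integral
      contour_integral (part_circlepath 0 r (c - pi) (c + pi)) ?f / \<i>) {c - pi..c + pi}"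
    if "r = r1 \<or> r = r2" for r c
    using that r
    by (intro has_integral_circle_param contour_integrable_holomorphic_simple[OF hol' \<open>open ?S\<close>]
        image) auto
  have "contour_integral (part_circlepath 0 r1 (a - pi) (a + pi)) ?f =
        contour_integral (part_circlepath 0 r2 (b - pi) (b + pi)) ?f"
    by (rule Cauchy_theorem_homotopic_loops[OF homotopic_loops_concentric_circles[OF r annulus']
          \<open>open ?S\<close> hol']) auto
  then show ?thesis
    using param[of r1 a] param[of r2 b] by (simp add: integral_unique)
qed

lemma integral_reflect_shift_real:
  fixes g :: "real \<Rightarrow> 'a::real_normed_vector"
  shows "integral {-c..c} (\<lambda>x. g (\<theta> - x)) = integral {\<theta> - c..\<theta> + c} g"
proof -
  have "integral {-c..c} (\<lambda>x. g (\<theta> - x)) = integral {-c..c} (g \<circ> (+) \<theta>)"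
    using Henstock_Kurzweil_Integration.integral_reflect_real[of c "-c" "\<lambda>x. g (\<theta> + x)"]
    by (simp add: o_def)
  also have "\<dots> = integral {\<theta> - c..\<theta> + c} g"
    by (simp add: integral_shift_Icc_real algebra_simps)
  finally show ?thesis .
qed

lemma of_real_divide_mult_cis:
  fixes t :: complex
  assumes "t \<noteq> 0"
  shows "of_real \<tau> / (t * cis \<eta>) = of_real (\<tau> / norm t) * cis (- Arg t - \<eta>)"
proof -
  have "t * cis \<eta> = of_real (norm t) * cis (Arg t) * cis \<eta>"
    using rcis_cmod_Arg[of t] by (simp add: rcis_def)
  also have "\<dots> = of_real (norm t) * cis (Arg t + \<eta>)"
    by (simp add: cis_mult mult.assoc)
  finally have "t * cis \<eta> = of_real (norm t) * cis (Arg t + \<eta>)" .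
  moreover have "inverse (cis (Arg t + \<eta>)) = cis (- Arg t - \<eta>)"
    by (simp only: cis_inverse minus_add_distrib diff_conv_add_uminus)
  ultimately show ?thesis
    using assms by (simp add: divide_inverse mult_ac)
qed

definition qpoch_kernel ::
    "complex list \<Rightarrow> complex list \<Rightarrow> complex list \<Rightarrow> complex list \<Rightarrow> complex \<Rightarrow> complex \<Rightarrow> complex \<Rightarrow> complex"
  where "qpoch_kernel as bs cs ds t q u =
    (qpoch_list bs (1 / u) q * qpoch_list as (t * u) q) / (qpoch_list ds (1 / u) q * qpoch_list cs (t * u) q)"

definition qpoch_kernel_domain :: "complex list \<Rightarrow> complex list \<Rightarrow> complex \<Rightarrow> complex set"
  where "qpoch_kernel_domain cs ds t =
    {u. u \<noteq> 0 \<and> (\<forall>d\<in>set ds. norm d < norm u) \<and> (\<forall>c\<in>set cs. norm (t * c) * norm u < 1)}"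

lemma qpoch_kernel_inversion:
  assumes "t \<noteq> 0"
  shows "qpoch_kernel bs as ds cs t q v = qpoch_kernel as bs cs ds t q (1 / (t * v))"
  using assms by (simp add: qpoch_kernel_def mult_ac)

lemma open_qpoch_kernel_domain: "open (qpoch_kernel_domain cs ds t)"
proof -
  have "qpoch_kernel_domain cs ds t = - {0} \<inter> (\<Inter>d\<in>set ds. {u. norm d < norm u}) \<inter>
      (\<Inter>c\<in>set cs. {u. norm (t * c) * norm u < 1})"
    by (auto simp: qpoch_kernel_domain_def)
  then show ?thesis
    by (simp only:) (intro open_Int open_Compl closed_singleton open_INT finite_set ballI
        open_Collect_less continuous_intros)
qed

lemma qpoch_kernel_holomorphic:
  assumes q: "norm q < 1"
  shows "qpoch_kernel as bs cs ds t q holomorphic_on qpoch_kernel_domain cs ds t"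
  unfolding qpoch_kernel_def[abs_def]
proof (intro holomorphic_intros qpoch_list_holomorphic q)
  fix u
  assume u: "u \<in> qpoch_kernel_domain cs ds t"
  have "qpoch_list ds (1 / u) q \<noteq> 0"
    using u by (intro qpoch_list_nonzero q) (auto simp: qpoch_kernel_domain_def norm_divide)
  moreover have "qpoch_list cs (t * u) q \<noteq> 0"
    using u by (intro qpoch_list_nonzero q) (auto simp: qpoch_kernel_domain_def norm_mult mult_ac)
  ultimately show "qpoch_list ds (1 / u) q * qpoch_list cs (t * u) q \<noteq> 0"
    by simp
qed (auto simp: qpoch_kernel_domain_def)

lemma annulus_subset_qpoch_kernel_domain:
  assumes "r1 > 0" "r2 > 0"
    and d: "\<forall>d\<in>set ds. norm d < min r1 r2"
    and c: "\<forall>c\<in>set cs. norm (t * c) * r1 < 1 \<and> norm (t * c) * r2 < 1"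
  shows "{u. min r1 r2 \<le> norm u \<and> norm u \<le> max r1 r2} \<subseteq> qpoch_kernel_domain cs ds t"
proof clarify
  fix u :: complex
  assume u: "min r1 r2 \<le> norm u" "norm u \<le> max r1 r2"
  have "norm (t * c) * norm u < 1" if "c \<in> set cs" for c
  proof -
    have "norm (t * c) * norm u \<le> norm (t * c) * max r1 r2"
      using u(2) by (rule mult_left_mono) simp
    also have "\<dots> < 1"
      using c that by (simp add: max_def)
    finally show ?thesis .
  qed
  with assms u show "u \<in> qpoch_kernel_domain cs ds t"
    by (force simp: qpoch_kernel_domain_def)
qed

lemma qpoch_kernel_circle_param:
  assumes "\<sigma> > 0"
  shows "(let z = exp (\<i> * of_real \<psi>) in
            (qpoch_list bs (of_real \<sigma> / z) q * qpoch_list as (t * z / of_real \<sigma>) q) /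
            (qpoch_list ds (of_real \<sigma> / z) q * qpoch_list cs (t * z / of_real \<sigma>) q))
       = qpoch_kernel as bs cs ds t q (of_real (1 / \<sigma>) * cis \<psi>)"
proof -
  have "of_real \<sigma> / exp (\<i> * of_real \<psi>) = 1 / (of_real (1 / \<sigma>) * cis \<psi>)"
    and "t * exp (\<i> * of_real \<psi>) / of_real \<sigma> = t * (of_real (1 / \<sigma>) * cis \<psi>)"
    using assms by (simp_all add: cis_conv_exp field_simps)
  then show ?thesis
    by (simp only: Let_def qpoch_kernel_def)
qed

text \<open>The inversion \<open>u = 1/(t v)\<close> maps the circle \<open>|v| = 1/\<tau>\<close> onto \<open>|u| = \<tau>/|t|\<close>,
  reversing its orientation.\<close>
lemma qpoch_kernel_inverted_circle_param:
  assumes "t \<noteq> 0"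
  shows "(let w = exp (\<i> * of_real \<eta>) in
            (qpoch_list as (of_real \<tau> / w) q * qpoch_list bs (t * w / of_real \<tau>) q) /
            (qpoch_list cs (of_real \<tau> / w) q * qpoch_list ds (t * w / of_real \<tau>) q))
       = qpoch_kernel as bs cs ds t q (of_real (\<tau> / norm t) * cis (- Arg t - \<eta>))"
proof -
  define w where "w = exp (\<i> * of_real \<eta>)"
  have "1 / (t * (w / of_real \<tau>)) = of_real \<tau> / (t * cis \<eta>)"
    by (simp add: w_def cis_conv_exp)
  also have "\<dots> = of_real (\<tau> / norm t) * cis (- Arg t - \<eta>)"
    by (rule of_real_divide_mult_cis[OF assms])
  finally have "qpoch_kernel as bs cs ds t q (of_real (\<tau> / norm t) * cis (- Arg t - \<eta>)) =
      qpoch_kernel bs as ds cs t q (w / of_real \<tau>)"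
    unfolding qpoch_kernel_inversion[OF assms, of bs as ds cs q] by simp
  then show ?thesis
    by (simp add: qpoch_kernel_def Let_def w_def)
qed

theorem lemma2p13:
  fixes as bs cs ds :: "complex list" and q t :: complex and \<sigma> \<tau> :: real
  assumes q: "0 < norm q" "norm q < 1"
    and nonempty: "as \<noteq> [] \<or> bs \<noteq> [] \<or> cs \<noteq> [] \<or> ds \<noteq> []"
    and \<sigma>: "\<sigma> > 0" and \<tau>: "\<tau> > 0" and t: "t \<noteq> 0"
    and bd: "\<forall>b\<in>set bs. \<forall>d\<in>set ds. norm b < norm d"
    and d: "\<forall>d\<in>set ds. norm d < min (\<tau> / norm t) (1 / \<sigma>)"
    and da: "\<forall>d\<in>set ds. \<forall>a\<in>set as. norm (d * a) < 1 / norm t"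
    and ac: "\<forall>a\<in>set as. \<forall>c\<in>set cs. norm a < norm c"
    and c: "\<forall>c\<in>set cs. norm c < min (\<sigma> / norm t) (1 / \<tau>)"
  shows "integral {-pi..pi} (\<lambda>\<psi>. let z = exp (\<i> * of_real \<psi>) in
            (qpoch_list bs (of_real \<sigma> / z) q * qpoch_list as (t * z / of_real \<sigma>) q) /
            (qpoch_list ds (of_real \<sigma> / z) q * qpoch_list cs (t * z / of_real \<sigma>) q))
       = integral {-pi..pi} (\<lambda>\<eta>. let w = exp (\<i> * of_real \<eta>) in
            (qpoch_list as (of_real \<tau> / w) q * qpoch_list bs (t * w / of_real \<tau>) q) /
            (qpoch_list cs (of_real \<tau> / w) q * qpoch_list ds (t * w / of_real \<tau>) q))"
proof -
  let ?K = "qpoch_kernel as bs cs ds t q" and ?r1 = "1 / \<sigma>" and ?r2 = "\<tau> / norm t"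
  have r: "?r1 > 0" "?r2 > 0"
    using \<sigma> \<tau> t by simp_all
  have "\<forall>d\<in>set ds. norm d < min ?r1 ?r2"
    using d by (simp add: min.commute)
  moreover have "\<forall>c\<in>set cs. norm (t * c) * ?r1 < 1 \<and> norm (t * c) * ?r2 < 1"
    using c \<sigma> \<tau> t by (simp add: norm_mult field_simps)
  ultimately have annulus: "{u. min ?r1 ?r2 \<le> norm u \<and> norm u \<le> max ?r1 ?r2} \<subseteq> qpoch_kernel_domain cs ds t"
    using r by (rule annulus_subset_qpoch_kernel_domain[rotated 2])
  have "integral {0 - pi..0 + pi} (\<lambda>\<psi>. ?K (of_real ?r1 * cis \<psi>)) =
        integral {- Arg t - pi..- Arg t + pi} (\<lambda>\<psi>. ?K (of_real ?r2 * cis \<psi>))"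
    by (rule integral_circle_eq_annulus[OF qpoch_kernel_holomorphic[OF q(2)] open_qpoch_kernel_domain
          r annulus])
  also have "\<dots> = integral {-pi..pi} (\<lambda>\<eta>. ?K (of_real ?r2 * cis (- Arg t - \<eta>)))"
    by (rule integral_reflect_shift_real[symmetric])
  finally show ?thesis
    by (simp only: qpoch_kernel_circle_param[OF \<sigma>] qpoch_kernel_inverted_circle_param[OF t]
        add_0 diff_0)
qed

end
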